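(* Consider the robot rendezvous system $$\dot{x}_k(t)=x_{k-1}(t)-x_k(t),\quad k\in\mathbb{Z},\ t\ge0,$$ with a good initial constellation $x_0=(x_k(0))_{k\in\mathbb{Z}}\in\ell^\infty(\mathbb{Z})$. Suppose there is $c\in\mathbb{C}$ such that $$\sup_{k\in\mathbb{Z}}\bigg|\frac{1}{n}\sum_{j=1}^n x_{k-j}(0)-c\bigg|=O(n^{-1})\quad\text{as } n\to\infty.$$ Then $\sup_{k\in\mathbb{Z}}|x_k(t)-c|=O(t^{-1/2})$ as $t\to\infty$.
   Context: $\ell^\infty(\mathbb{Z})$ is the Banach space of bounded doubly infinite complex sequences with the supremum norm. $S$ denotes the right-shift operator on $\ell^\infty(\mathbb{Z})$, $S(x_k)=(x_{k-1})$. For $x_0\in\ell^\infty(\mathbb{Z})$, the solution of the system is $x(t)=(x_k(t))_{k\in\mathbb{Z}}=\exp(t(S-I))x_0$, $t\ge0$. An initial constellation $x_0\in\ell^\infty(\mathbb{Z})$ is called good if there exist constants $c_k\in\mathbb{C}$, $k\in\mathbb{Z}$, such that the corresponding solution satisfies $\sup_{k\in\mathbb{Z}}|x_k(t)-c_k|\to0$ as $t\to\infty$. For nonnegative functions, $a(t)=O(b(t))$ as $t\to\infty$ means there is $C>0$ with $a(t)\le Cb(t)$ for all sufficiently large $t$; similarly for sequences. *)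

theory Defs
  imports "HOL-Analysis.Analysis" "HOL-Library.Landau_Symbols"
begin

text \<open>The Banach space l-infinity over the integers: bounded (automatically continuous,
  as int carries the discrete topology) complex sequences, with the sup norm.\<close>
type_synonym linf = "int \<Rightarrow>\<^sub>C complex"

definition shiftR :: "linf \<Rightarrow>\<^sub>L linf" where
  "shiftR = Blinfun (\<lambda>f. Bcontfun (\<lambda>k. apply_bcontfun f (k - 1)))"

definition op_pow :: "linf \<Rightarrow>\<^sub>L linf \<Rightarrow> nat \<Rightarrow> linf \<Rightarrow>\<^sub>L linf" where
  "op_pow A n = ((\<lambda>B. A o\<^sub>L B) ^^ n) id_blinfun"

definition op_exp :: "linf \<Rightarrow>\<^sub>L linf \<Rightarrow> linf \<Rightarrow>\<^sub>L linf" where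
  "op_exp A = (\<Sum>n. (1 / fact n) *\<^sub>R op_pow A n)"

definition rsol :: "real \<Rightarrow> linf \<Rightarrow> linf" where
  "rsol t x0 = blinfun_apply (op_exp (t *\<^sub>R (shiftR - id_blinfun))) x0"

definition good :: "linf \<Rightarrow> bool" where
  "good x0 \<longleftrightarrow> (\<exists>c :: int \<Rightarrow> complex. \<forall>\<epsilon>>0. eventually
      (\<lambda>t. \<forall>k. cmod (apply_bcontfun (rsol t x0) k - c k) \<le> \<epsilon>) at_top)"

end

theory Submission
  imports Defs
begin

text \<open>The solution is \<open>x(t) = e\<^sup>-\<^sup>t e\<^sup>t\<^sup>S x\<^sub>0\<close>, so \<open>x\<^sub>k(t) = \<Sum>\<^sub>m \<pi>\<^sub>t(m) x\<^sub>0(k - m)\<close> with the Poisson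
  weights \<open>\<pi>\<^sub>t(m) = e\<^sup>-\<^sup>t t\<^sup>m / m!\<close>. As the weights sum to 1, \<open>x\<^sub>k(t) - c = \<Sum>\<^sub>m \<pi>\<^sub>t(m) d\<^sub>m\<close> with
  \<open>d\<^sub>m = x\<^sub>0(k - m) - c\<close>, and the hypothesis amounts to saying that the partial sums \<open>d\<^sub>1 + \<dots> + d\<^sub>n\<close>
  are bounded uniformly in \<open>k\<close> and \<open>n\<close>. Abel summation then bounds \<open>x\<^sub>k(t) - c\<close>, up to the
  exponentially small term \<open>\<pi>\<^sub>t(0) d\<^sub>0\<close>, by that bound times the total variation of \<open>\<pi>\<^sub>t\<close>.
  Since \<open>\<pi>\<^sub>t(m) - \<pi>\<^sub>t(m+1) = \<pi>\<^sub>t(m+1) (m + 1 - t) / t\<close> and \<open>2 \<surd>t \<bar>u\<bar> \<le> u\<^sup>2 + t\<close>, the total variation is at most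
  \<open>E(N - t)\<^sup>2 / (2 t\<^sup>3\<^sup>/\<^sup>2) + 1 / (2 \<surd>t) = 1 / \<surd>t\<close> for a Poisson variable \<open>N\<close> of variance \<open>t\<close>.\<close>

text \<open>The discrete metric on \<open>int\<close>; it makes \<open>linf\<close> a Banach space, so that the exponential
  series defining the solution converges.\<close>

instantiation int :: metric_space
begin

definition dist_int :: "int \<Rightarrow> int \<Rightarrow> real"
  where "dist_int x y = real_of_int \<bar>x - y\<bar>"

definition uniformity_int :: "(int \<times> int) filter"
  where "uniformity_int = (INF e\<in>{0<..}. principal {(x, y). dist x y < e})"

instance
proof
  fix U :: "int set"
  have "eventually (\<lambda>(x', y). x' = x \<longrightarrow> y \<in> U) uniformity" if "x \<in> U" for x
  proof -
    have near: "dist x y < 1 \<Longrightarrow> y = x" for y :: int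
      by (simp add: dist_int_def)
    show ?thesis
      unfolding uniformity_int_def
      by (intro eventually_INF1[where i=1]) (auto simp: eventually_principal that dest: near)
  qed
  then show "open U \<longleftrightarrow> (\<forall>x\<in>U. eventually (\<lambda>(x', y). x' = x \<longrightarrow> y \<in> U) uniformity)"
    by (simp add: open_discrete)
qed (auto simp: dist_int_def uniformity_int_def)

end

instance bcontfun :: (metric_space, banach) banach ..

subsection \<open>The solution as a Poisson average\<close>

lemma bcontfun_shift: "(\<lambda>k. apply_bcontfun (f::linf) (k - 1)) \<in> bcontfun"
  by (rule bcontfun_normI[where b="norm f"]) (auto intro: norm_bounded)

lemma apply_bcontfun_shift:
  "apply_bcontfun (Bcontfun (\<lambda>k. apply_bcontfun (f::linf) (k - 1))) k = apply_bcontfun f (k - 1)"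
  using bcontfun_shift by (simp add: Bcontfun_inverse)

lemma bounded_linear_shift: "bounded_linear (\<lambda>f::linf. Bcontfun (\<lambda>k. apply_bcontfun f (k - 1)))"
proof (rule bounded_linear_intro[where K=1])
  show "Bcontfun (\<lambda>k. apply_bcontfun (f + g) (k - 1)) =
      Bcontfun (\<lambda>k. apply_bcontfun f (k - 1)) + Bcontfun (\<lambda>k. apply_bcontfun g (k - 1))" for f g :: linf
    by (rule bcontfun_eqI) (subst apply_bcontfun_shift, simp add: apply_bcontfun_shift)
  show "Bcontfun (\<lambda>k. apply_bcontfun (r *\<^sub>R f) (k - 1)) = r *\<^sub>R Bcontfun (\<lambda>k. apply_bcontfun f (k - 1))"
    for r and f :: linf
    by (rule bcontfun_eqI) (subst apply_bcontfun_shift, simp add: apply_bcontfun_shift)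
  show "norm (Bcontfun (\<lambda>k. apply_bcontfun f (k - 1))) \<le> norm f * 1" for f :: linf
    by (auto intro!: norm_bound simp: apply_bcontfun_shift norm_bounded)
qed

lemma shiftR_apply: "apply_bcontfun (blinfun_apply shiftR f) k = apply_bcontfun f (k - 1)"
  unfolding shiftR_def
  by (simp add: bounded_linear_Blinfun_apply[OF bounded_linear_shift] apply_bcontfun_shift)

lemma bounded_linear_apply_bcontfun:
  "bounded_linear (\<lambda>f::('a::topological_space, 'b::real_normed_vector) bcontfun. apply_bcontfun f x)"
  by (rule bounded_linear_intro[where K=1]) (auto simp: norm_bounded)

lemma sum_atMost_Suc_choose:
  fixes g :: "nat \<Rightarrow> 'a::comm_semiring_1"
  shows "(\<Sum>i\<le>Suc n. of_nat (Suc n choose i) * g i) = (\<Sum>i\<le>n. of_nat (n choose i) * (g i + g (Suc i)))"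
proof -
  have drop_last: "(\<Sum>i\<le>n. of_nat (n choose i) * g i) = g 0 + (\<Sum>i\<le>n. of_nat (n choose Suc i) * g (Suc i))"
  proof -
    have "(\<Sum>i\<le>n. of_nat (n choose Suc i) * g (Suc i)) = (\<Sum>i<n. of_nat (n choose Suc i) * g (Suc i))"
      by (simp add: lessThan_Suc_atMost[symmetric] binomial_eq_0)
    then show ?thesis by (simp add: sum.atMost_shift)
  qed
  have "(\<Sum>i\<le>Suc n. of_nat (Suc n choose i) * g i)
      = g 0 + (\<Sum>i\<le>n. of_nat (n choose i) * g (Suc i)) + (\<Sum>i\<le>n. of_nat (n choose Suc i) * g (Suc i))"
    by (simp add: sum.atMost_Suc_shift sum.distrib distrib_right add.assoc del: sum.atMost_Suc)
  then show ?thesis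
    by (simp add: drop_last sum.distrib distrib_left add_ac)
qed

lemma op_pow_shift_apply:
  "apply_bcontfun (blinfun_apply (op_pow (a *\<^sub>R shiftR + b *\<^sub>R id_blinfun) n) x) k =
     (\<Sum>i\<le>n. of_nat (n choose i) * ((a ^ i * b ^ (n - i)) *\<^sub>R apply_bcontfun x (k - int i)))"
proof (induction n arbitrary: k)
  case 0
  then show ?case by (simp add: op_pow_def)
next
  case (Suc n)
  define g where "g i = (a ^ i * b ^ (Suc n - i)) *\<^sub>R apply_bcontfun x (k - int i)" for i
  have "apply_bcontfun (blinfun_apply (op_pow (a *\<^sub>R shiftR + b *\<^sub>R id_blinfun) (Suc n)) x) k
      = a *\<^sub>R apply_bcontfun (blinfun_apply (op_pow (a *\<^sub>R shiftR + b *\<^sub>R id_blinfun) n) x) (k - 1)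
        + b *\<^sub>R apply_bcontfun (blinfun_apply (op_pow (a *\<^sub>R shiftR + b *\<^sub>R id_blinfun) n) x) k"
    by (simp add: op_pow_def blinfun.add_left blinfun.scaleR_left shiftR_apply)
  also have "\<dots> = (\<Sum>i\<le>n. of_nat (n choose i) * (g i + g (Suc i)))"
  proof -
    have "g i = b *\<^sub>R ((a ^ i * b ^ (n - i)) *\<^sub>R apply_bcontfun x (k - int i))" if "i \<le> n" for i
      using that by (simp add: g_def Suc_diff_le)
    moreover have "g (Suc i) = a *\<^sub>R ((a ^ i * b ^ (n - i)) *\<^sub>R apply_bcontfun x (k - 1 - int i))" for i
      by (simp add: g_def algebra_simps)
    ultimately show ?thesis
      unfolding Suc.IH scaleR_sum_right
      by (auto simp: sum.distrib[symmetric] algebra_simps intro!: sum.cong)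
  qed
  also have "\<dots> = (\<Sum>i\<le>Suc n. of_nat (Suc n choose i) * g i)"
    by (rule sum_atMost_Suc_choose[symmetric])
  finally show ?case by (simp add: g_def)
qed

lemma norm_op_pow_le: "norm (op_pow A n) \<le> norm A ^ n"
proof (induction n)
  case 0
  then show ?case by (simp add: op_pow_def norm_blinfun_id_le)
next
  case (Suc n)
  have "norm (op_pow A (Suc n)) \<le> norm A * norm (op_pow A n)"
    using norm_blinfun_compose by (simp add: op_pow_def)
  also have "\<dots> \<le> norm A * norm A ^ n"
    using Suc by (simp add: mult_left_mono)
  finally show ?case by simp
qed

lemma summable_op_exp_series: "summable (\<lambda>n. (1 / fact n) *\<^sub>R op_pow A n)"
proof (rule summable_comparison_test')
  show "summable (\<lambda>n. norm A ^ n / fact n)"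
    using summable_exp_generic[of "norm A"] by (simp add: divide_inverse mult.commute)
  show "norm ((1 / fact n) *\<^sub>R op_pow A n) \<le> norm A ^ n / fact n" for n
    using norm_op_pow_le[of A n] by (simp add: divide_right_mono)
qed

lemma op_exp_sums: "(\<lambda>n. (1 / fact n) *\<^sub>R op_pow A n) sums op_exp A"
  unfolding op_exp_def by (rule summable_sums[OF summable_op_exp_series])

lemma rsol_apply_sums:
  "(\<lambda>n. (1 / fact n) *\<^sub>R apply_bcontfun (blinfun_apply (op_pow (t *\<^sub>R shiftR + (-t) *\<^sub>R id_blinfun) n) x) k)
    sums apply_bcontfun (rsol t x) k"
proof -
  have "bounded_linear (\<lambda>B. apply_bcontfun (blinfun_apply B x) k)"
    by (rule bounded_linear_compose[OF bounded_linear_apply_bcontfun bounded_linear_apply_blinfun])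
  from bounded_linear.sums[OF this op_exp_sums]
  have "(\<lambda>n. (1 / fact n) *\<^sub>R apply_bcontfun (blinfun_apply (op_pow A n) x) k)
      sums apply_bcontfun (blinfun_apply (op_exp A) x) k" for A
    by (simp only: blinfun.scaleR_left scaleR_bcontfun.rep_eq)
  moreover have "t *\<^sub>R (shiftR - id_blinfun) = t *\<^sub>R shiftR + (-t) *\<^sub>R id_blinfun"
    by (simp add: algebra_simps)
  ultimately show ?thesis
    by (simp only: rsol_def)
qed

lemma exp_series_sums: "(\<lambda>m. t ^ m / fact m) sums exp (t::real)"
  using exp_converges[of t] by (simp add: divide_inverse mult.commute)

lemma summable_norm_exp_shift_series:
  "summable (\<lambda>m. norm ((t ^ m / fact m) *\<^sub>R apply_bcontfun (x::linf) (k - int m)))"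
proof (rule summable_comparison_test')
  show "summable (\<lambda>m. \<bar>t\<bar> ^ m / fact m * norm x)"
    using exp_series_sums[of "\<bar>t\<bar>"] by (intro summable_mult2 sums_summable)
  show "norm (norm ((t ^ m / fact m) *\<^sub>R apply_bcontfun x (k - int m))) \<le> \<bar>t\<bar> ^ m / fact m * norm x" for m
    using norm_bounded[of x "k - int m"] by (simp add: power_abs divide_right_mono mult_left_mono)
qed

lemma power_div_fact_mult_binomial:
  fixes s t :: real
  assumes "i \<le> n"
  shows "t ^ i / fact i * (s ^ (n - i) / fact (n - i)) = 1 / fact n * (real (n choose i) * (t ^ i * s ^ (n - i)))"
  using assms by (simp add: binomial_fact)

definition poisson_weight :: "real \<Rightarrow> nat \<Rightarrow> real"
  where "poisson_weight t m = exp (-t) * t ^ m / fact m"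

lemma rsol_sums_poisson:
  "(\<lambda>m. poisson_weight t m *\<^sub>R apply_bcontfun x (k - int m)) sums apply_bcontfun (rsol t x) k"
proof -
  \<comment> \<open>The Cauchy product of the series \<open>a\<close> of \<open>(e\<^sup>t\<^sup>S x)\<^sub>k\<close> with the series \<open>b\<close> of \<open>e\<^sup>-\<^sup>t\<close> is,
    by the binomial expansion of \<open>(tS - tI)\<^sup>n\<close>, the exponential series of \<open>t(S - I)\<close>.\<close>
  define a where "a m = (t ^ m / fact m) *\<^sub>R apply_bcontfun x (k - int m)" for m
  define b where "b j = complex_of_real ((-t) ^ j / fact j)" for j
  have norm_a: "summable (\<lambda>m. norm (a m))"
    unfolding a_def by (rule summable_norm_exp_shift_series)
  have norm_b: "summable (\<lambda>m. norm (b m))"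
  proof -
    have "norm (b m) = \<bar>t\<bar> ^ m / fact m" for m
      unfolding b_def norm_of_real by (simp add: power_abs)
    then show ?thesis
      using exp_series_sums[of "\<bar>t\<bar>"] by (simp add: sums_summable)
  qed
  have "suminf b = exp (-t)"
    unfolding b_def by (rule sums_unique[symmetric], rule sums_of_real[OF exp_series_sums])
  have "a i * b (n - i) = of_real (1 / fact n) *
      (of_nat (n choose i) * ((t ^ i * (-t) ^ (n - i)) *\<^sub>R apply_bcontfun x (k - int i)))"
    if "i \<le> n" for i n
  proof -
    have "a i * b (n - i) = of_real (t ^ i / fact i * ((-t) ^ (n - i) / fact (n - i))) * apply_bcontfun x (k - int i)"
      by (simp add: a_def b_def scaleR_conv_of_real)
    then show ?thesis
      by (simp only: power_div_fact_mult_binomial[OF that]) (simp add: scaleR_conv_of_real)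
  qed
  then have "(\<Sum>i\<le>n. a i * b (n - i)) = of_real (1 / fact n) *
      apply_bcontfun (blinfun_apply (op_pow (t *\<^sub>R shiftR + (-t) *\<^sub>R id_blinfun) n) x) k" for n
    unfolding op_pow_shift_apply sum_distrib_left by (intro sum.cong) auto
  moreover note rsol_apply_sums
  ultimately have "(\<lambda>n. \<Sum>i\<le>n. a i * b (n - i)) sums apply_bcontfun (rsol t x) k"
    by (simp add: scaleR_conv_of_real)
  moreover have "(\<lambda>n. \<Sum>i\<le>n. a i * b (n - i)) sums (suminf a * suminf b)"
    by (rule Cauchy_product_sums[OF norm_a norm_b])
  ultimately have "apply_bcontfun (rsol t x) k = suminf a * exp (-t)"
    using \<open>suminf b = exp (-t)\<close> by (simp add: sums_unique2)
  moreover have "(\<lambda>m. a m * exp (-t)) sums (suminf a * exp (-t))"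
    using summable_sums[OF summable_norm_cancel[OF norm_a]] by (rule sums_mult2)
  ultimately show ?thesis
    by (simp add: a_def poisson_weight_def scaleR_conv_of_real mult_ac)
qed

subsection \<open>Poisson weights\<close>

lemma poisson_weight_nonneg: "t \<ge> 0 \<Longrightarrow> 0 \<le> poisson_weight t m"
  by (simp add: poisson_weight_def)

lemma poisson_weight_Suc: "real (Suc m) * poisson_weight t (Suc m) = t * poisson_weight t m"
  by (simp add: poisson_weight_def field_simps del: of_nat_Suc)

lemma poisson_weight_sums: "poisson_weight t sums 1"
proof -
  have "(\<lambda>m. exp (-t) * (t ^ m / fact m)) sums (exp (-t) * exp t)"
    by (rule sums_mult[OF exp_series_sums])
  then show ?thesis
    by (simp add: poisson_weight_def[abs_def] mult.assoc flip: exp_add)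
qed

lemma poisson_weight_mean: "(\<lambda>m. real m * poisson_weight t m) sums t"
proof -
  have "(\<lambda>m. real (Suc m) * poisson_weight t (Suc m)) sums (t * 1)"
    unfolding poisson_weight_Suc by (rule sums_mult[OF poisson_weight_sums])
  then show ?thesis
    by (subst (asm) sums_Suc_iff) simp
qed

lemma poisson_weight_factorial_moment: "(\<lambda>m. real m * (real m - 1) * poisson_weight t m) sums t\<^sup>2"
proof -
  have "real (Suc m) * (real (Suc m) - 1) * poisson_weight t (Suc m) = t * (real m * poisson_weight t m)" for m
  proof -
    have "real (Suc m) * (real (Suc m) - 1) * poisson_weight t (Suc m) = real m * (real (Suc m) * poisson_weight t (Suc m))"
      by simp
    then show ?thesis
      by (simp only: poisson_weight_Suc mult.left_commute)
  qed
  then have "(\<lambda>m. real (Suc m) * (real (Suc m) - 1) * poisson_weight t (Suc m)) sums (t * t)"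
    by (simp only: sums_mult[OF poisson_weight_mean])
  then show ?thesis
    by (subst (asm) sums_Suc_iff) (simp add: power2_eq_square)
qed

lemma poisson_weight_variance: "(\<lambda>m. (real m - t)\<^sup>2 * poisson_weight t m) sums t"
proof -
  have "(\<lambda>m. real m * (real m - 1) * poisson_weight t m + real m * poisson_weight t m
      - 2 * t * (real m * poisson_weight t m) + t\<^sup>2 * poisson_weight t m) sums (t\<^sup>2 + t - 2 * t * t + t\<^sup>2 * 1)"
    by (intro sums_add sums_diff sums_mult poisson_weight_factorial_moment poisson_weight_mean poisson_weight_sums)
  then show ?thesis
    by (simp add: algebra_simps power2_eq_square)
qed

lemma poisson_weight_diff_abs_le:
  assumes "t > 0"
  shows "\<bar>poisson_weight t m - poisson_weight t (Suc m)\<bar>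
    \<le> ((real (Suc m) - t)\<^sup>2 + t) * poisson_weight t (Suc m) / (2 * t * sqrt t)"
proof -
  define P where "P = poisson_weight t (Suc m)"
  define u where "u = real (Suc m) - t"
  have "P \<ge> 0"
    unfolding P_def using assms by (simp add: poisson_weight_nonneg)
  have "poisson_weight t m - P = u * P / t"
    using poisson_weight_Suc[of m t] assms unfolding P_def u_def by (simp add: field_simps)
  then have "\<bar>poisson_weight t m - P\<bar> = (2 * sqrt t * \<bar>u\<bar>) * P / (2 * t * sqrt t)"
    using assms \<open>P \<ge> 0\<close> by (simp add: abs_mult)
  also have "\<dots> \<le> (u\<^sup>2 + t) * P / (2 * t * sqrt t)"
  proof -
    have "0 \<le> (\<bar>u\<bar> - sqrt t)\<^sup>2" by simp
    then have "2 * sqrt t * \<bar>u\<bar> \<le> u\<^sup>2 + t"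
      using assms by (simp add: power2_diff mult.commute mult.left_commute)
    then show ?thesis
      using assms \<open>P \<ge> 0\<close> by (intro divide_right_mono mult_right_mono) simp_all
  qed
  finally show ?thesis unfolding P_def u_def .
qed

lemma poisson_weight_total_variation:
  assumes "t > 0"
  shows "summable (\<lambda>m. \<bar>poisson_weight t m - poisson_weight t (Suc m)\<bar>)"
    and "(\<Sum>m. \<bar>poisson_weight t m - poisson_weight t (Suc m)\<bar>) \<le> 1 / sqrt t"
proof -
  define q where "q m = ((real m - t)\<^sup>2 + t) * poisson_weight t m / (2 * t * sqrt t)" for m
  have "q sums ((t + t * 1) / (2 * t * sqrt t))"
    unfolding q_def distrib_right
    by (intro sums_divide sums_add sums_mult poisson_weight_variance poisson_weight_sums)
  then have q_sums: "q sums (1 / sqrt t)"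
    using assms by (simp add: field_simps)
  then have q_Suc_sums: "(\<lambda>m. q (Suc m)) sums (1 / sqrt t - q 0)"
    by (simp add: sums_Suc_iff)
  have bound: "norm \<bar>poisson_weight t m - poisson_weight t (Suc m)\<bar> \<le> q (Suc m)" for m
    unfolding q_def using poisson_weight_diff_abs_le[OF assms] by simp
  show summable: "summable (\<lambda>m. \<bar>poisson_weight t m - poisson_weight t (Suc m)\<bar>)"
    using summable_comparison_test'[OF sums_summable[OF q_Suc_sums] bound] .
  have "(\<Sum>m. \<bar>poisson_weight t m - poisson_weight t (Suc m)\<bar>) \<le> 1 / sqrt t - q 0"
    using bound by (intro sums_le[OF _ summable_sums[OF summable] q_Suc_sums]) simp
  also have "\<dots> \<le> 1 / sqrt t"
    using assms by (simp add: q_def poisson_weight_nonneg)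
  finally show "(\<Sum>m. \<bar>poisson_weight t m - poisson_weight t (Suc m)\<bar>) \<le> 1 / sqrt t" .
qed

subsection \<open>Abel summation\<close>

lemma abel_summation_norm_le:
  fixes p :: "nat \<Rightarrow> real" and d :: "nat \<Rightarrow> 'a::banach"
  assumes sums: "(\<lambda>m. p m *\<^sub>R d m) sums S"
    and summable_p: "summable (\<lambda>m. \<bar>p m\<bar>)"
    and summable_variation: "summable (\<lambda>m. \<bar>p m - p (Suc m)\<bar>)"
    and partial_sums: "\<And>n. norm (\<Sum>j=1..n. d j) \<le> B"
  shows "norm (S - p 0 *\<^sub>R d 0) \<le> B * (\<Sum>m. \<bar>p m - p (Suc m)\<bar>)"
proof -
  define s where "s n = (\<Sum>j=1..n. d j)" for n
  have "summable (\<lambda>m. p m *\<^sub>R s m)"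
  proof (rule summable_comparison_test')
    show "summable (\<lambda>m. \<bar>p m\<bar> * B)"
      by (rule summable_mult2[OF summable_p])
    show "norm (p m *\<^sub>R s m) \<le> \<bar>p m\<bar> * B" for m
      using partial_sums[of m] by (simp add: s_def mult_left_mono)
  qed
  then obtain \<sigma> where "(\<lambda>m. p m *\<^sub>R s m) sums \<sigma>"
    by blast
  moreover have "s 0 = 0"
    by (simp add: s_def)
  ultimately have "(\<lambda>m. p (Suc m) *\<^sub>R s (Suc m)) sums \<sigma>"
    by (subst sums_Suc_iff) simp
  moreover have "(\<lambda>m. p (Suc m) *\<^sub>R d (Suc m)) sums (S - p 0 *\<^sub>R d 0)"
    using sums by (subst sums_Suc_iff) simp
  moreover have "p (Suc m) *\<^sub>R s m = p (Suc m) *\<^sub>R s (Suc m) - p (Suc m) *\<^sub>R d (Suc m)" for m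
    by (simp add: s_def scaleR_right_distrib)
  ultimately have "(\<lambda>m. p (Suc m) *\<^sub>R s m) sums (\<sigma> - (S - p 0 *\<^sub>R d 0))"
    by (simp only: sums_diff)
  from sums_diff[OF \<open>(\<lambda>m. p m *\<^sub>R s m) sums \<sigma>\<close> this]
  have by_parts: "(\<lambda>m. (p m - p (Suc m)) *\<^sub>R s m) sums (S - p 0 *\<^sub>R d 0)"
    by (simp add: scaleR_left_diff_distrib)
  have norm_le: "norm ((p m - p (Suc m)) *\<^sub>R s m) \<le> \<bar>p m - p (Suc m)\<bar> * B" for m
    using partial_sums[of m] by (simp add: s_def mult_left_mono)
  have summable_norm_terms: "summable (\<lambda>m. norm ((p m - p (Suc m)) *\<^sub>R s m))"
    by (rule summable_comparison_test'[OF summable_mult2[OF summable_variation, of B]]) (use norm_le in simp)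
  have "norm (S - p 0 *\<^sub>R d 0) \<le> (\<Sum>m. norm ((p m - p (Suc m)) *\<^sub>R s m))"
    using summable_norm[OF summable_norm_terms] by_parts by (simp add: sums_iff)
  also have "\<dots> \<le> (\<Sum>m. \<bar>p m - p (Suc m)\<bar> * B)"
    by (intro suminf_le norm_le summable_norm_terms summable_mult2 summable_variation)
  also have "\<dots> = B * (\<Sum>m. \<bar>p m - p (Suc m)\<bar>)"
    using suminf_mult2[OF summable_variation, of B] by (simp add: mult.commute)
  finally show ?thesis .
qed

lemma norm_sum_shifted_deviation_le:
  "cmod (\<Sum>j=1..n. (apply_bcontfun x0 (k - int j) - c)) \<le> real n * (norm x0 + cmod c)"
proof -
  have "cmod (\<Sum>j=1..n. (apply_bcontfun x0 (k - int j) - c)) \<le> (\<Sum>j=1..n. cmod (apply_bcontfun x0 (k - int j) - c))"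
    by (rule norm_sum)
  also have "\<dots> \<le> (\<Sum>j=1..n. norm x0 + cmod c)"
  proof (rule sum_mono)
    show "cmod (apply_bcontfun x0 (k - int j) - c) \<le> norm x0 + cmod c" for j
      using norm_triangle_ineq4[of "apply_bcontfun x0 (k - int j)" c] norm_bounded[of x0 "k - int j"] by linarith
  qed
  finally show ?thesis by simp
qed

lemma norm_sum_diff_eq_mean_deviation:
  fixes z :: "nat \<Rightarrow> complex"
  assumes "n > 0"
  shows "cmod (\<Sum>j=1..n. (z j - c)) = real n * cmod ((1 / of_nat n) * (\<Sum>j=1..n. z j) - c)"
proof -
  have "(\<Sum>j=1..n. (z j - c)) = of_nat n * ((1 / of_nat n) * (\<Sum>j=1..n. z j) - c)"
    using assms by (simp add: sum_subtractf algebra_simps)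
  then show ?thesis
    by (simp add: norm_mult)
qed

lemma bigo_mean_deviation_imp_bounded_partial_sums:
  fixes x0 :: linf and c :: complex
  assumes "(\<lambda>n::nat. SUP k. cmod ((1 / of_nat n) * (\<Sum>j=1..n. apply_bcontfun x0 (k - int j)) - c))
           \<in> O(\<lambda>n. 1 / real n)"
  obtains B where "\<And>k n. cmod (\<Sum>j=1..n. (apply_bcontfun x0 (k - int j) - c)) \<le> B"
proof -
  define M where "M = norm x0 + cmod c"
  define \<delta> where "\<delta> n k = cmod ((1 / of_nat n) * (\<Sum>j=1..n. apply_bcontfun x0 (k - int j)) - c)" for n k
  obtain C where "C > 0" and "eventually (\<lambda>n. norm (SUP k. \<delta> n k) \<le> C * norm (1 / real n)) sequentially"
    using landau_o.bigE[OF assms] unfolding \<delta>_def by blast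
  then obtain N where C: "\<And>n. n \<ge> N \<Longrightarrow> norm (SUP k. \<delta> n k) \<le> C * norm (1 / real n)"
    by (auto simp: eventually_sequentially)
  have sum_eq: "cmod (\<Sum>j=1..n. (apply_bcontfun x0 (k - int j) - c)) = real n * \<delta> n k" if "n > 0" for n k
    unfolding \<delta>_def using that by (rule norm_sum_diff_eq_mean_deviation)
  have "cmod (\<Sum>j=1..n. (apply_bcontfun x0 (k - int j) - c)) \<le> C + real N * M" for k n
  proof (cases "n \<ge> max N 1")
    case True
    then have "n > 0" "n \<ge> N" by auto
    have "\<delta> n k' \<le> M" for k'
      using norm_sum_shifted_deviation_le[of x0 k' c n] sum_eq[OF \<open>n > 0\<close>]
      by (simp add: M_def mult_le_cancel_left_pos \<open>n > 0\<close>)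
    then have "\<delta> n k \<le> (SUP k'. \<delta> n k')"
      by (intro cSUP_upper bdd_aboveI) auto
    also have "\<dots> \<le> C / real n"
      using C[OF \<open>n \<ge> N\<close>] by simp
    finally have "real n * \<delta> n k \<le> C"
      using \<open>n > 0\<close> by (simp add: field_simps)
    moreover have "0 \<le> real N * M"
      by (simp add: M_def)
    ultimately show ?thesis
      using sum_eq[OF \<open>n > 0\<close>, of k] by linarith
  next
    case False
    then have "n \<le> N" by arith
    have "cmod (\<Sum>j=1..n. (apply_bcontfun x0 (k - int j) - c)) \<le> real n * M"
      unfolding M_def by (rule norm_sum_shifted_deviation_le)
    also have "\<dots> \<le> real N * M"
      using \<open>n \<le> N\<close> by (intro mult_right_mono) (simp_all add: M_def)
    finally show ?thesis
      using \<open>C > 0\<close> by linarith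
  qed
  then show ?thesis by (rule that)
qed

lemma rsol_deviation_le:
  fixes x0 :: linf and c :: complex
  assumes "t > 0" and partial_sums: "\<And>n. cmod (\<Sum>j=1..n. (apply_bcontfun x0 (k - int j) - c)) \<le> B"
  shows "cmod (apply_bcontfun (rsol t x0) k - c) \<le> exp (-t) * (norm x0 + cmod c) + B / sqrt t"
proof -
  define d where "d m = apply_bcontfun x0 (k - int m) - c" for m
  have "(\<lambda>m. poisson_weight t m *\<^sub>R d m) sums (apply_bcontfun (rsol t x0) k - c)"
    using sums_diff[OF rsol_sums_poisson sums_scaleR_left[OF poisson_weight_sums]]
    by (simp add: d_def scaleR_right_diff_distrib)
  moreover have "summable (\<lambda>m. \<bar>poisson_weight t m\<bar>)"
    using sums_summable[OF poisson_weight_sums] poisson_weight_nonneg \<open>t > 0\<close> by simp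
  ultimately have "cmod (apply_bcontfun (rsol t x0) k - c - poisson_weight t 0 *\<^sub>R d 0)
      \<le> B * (\<Sum>m. \<bar>poisson_weight t m - poisson_weight t (Suc m)\<bar>)"
    using \<open>t > 0\<close>
    by (intro abel_summation_norm_le poisson_weight_total_variation partial_sums[unfolded d_def[symmetric]])
  also have "\<dots> \<le> B / sqrt t"
    using poisson_weight_total_variation(2)[OF \<open>t > 0\<close>] partial_sums[of 0]
    by (simp add: mult_left_mono divide_inverse)
  finally have "cmod (apply_bcontfun (rsol t x0) k - c - poisson_weight t 0 *\<^sub>R d 0) \<le> B / sqrt t" .
  moreover have "cmod (poisson_weight t 0 *\<^sub>R d 0) \<le> exp (-t) * (norm x0 + cmod c)"
    using norm_triangle_ineq4[of "apply_bcontfun x0 k" c] norm_bounded[of x0 k]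
    by (simp add: poisson_weight_def d_def)
  ultimately show ?thesis
    using norm_triangle_ineq[of "apply_bcontfun (rsol t x0) k - c - poisson_weight t 0 *\<^sub>R d 0"
        "poisson_weight t 0 *\<^sub>R d 0"] by simp
qed

lemma exp_minus_le_inverse_sqrt:
  fixes t :: real
  assumes "t \<ge> 1"
  shows "exp (-t) \<le> 1 / sqrt t"
proof -
  have "sqrt t \<le> t"
    using assms real_sqrt_le_mono[of t "t\<^sup>2"] by (simp add: power2_eq_square)
  also have "\<dots> \<le> exp t"
    using exp_ge_add_one_self[of t] by linarith
  finally show ?thesis
    using assms by (simp add: exp_minus field_simps)
qed

lemma abs_SUP_le:
  fixes f :: "'a \<Rightarrow> real"
  assumes "\<And>x. 0 \<le> f x" and "\<And>x. f x \<le> b"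
  shows "\<bar>SUP x. f x\<bar> \<le> b"
proof -
  have "0 \<le> (SUP x. f x)"
    using assms by (intro order_trans[OF _ cSUP_upper[of undefined]] bdd_aboveI) auto
  moreover have "(SUP x. f x) \<le> b"
    using assms(2) by (intro cSUP_least) auto
  ultimately show ?thesis by simp
qed

lemma abs_SUP_rsol_deviation_le:
  fixes x0 :: linf and c :: complex
  assumes "t \<ge> 1" and partial_sums: "\<And>k n. cmod (\<Sum>j=1..n. (apply_bcontfun x0 (k - int j) - c)) \<le> B"
  shows "\<bar>SUP k. cmod (apply_bcontfun (rsol t x0) k - c)\<bar> \<le> (norm x0 + cmod c + B) / sqrt t"
proof (rule abs_SUP_le)
  fix k
  have "cmod (apply_bcontfun (rsol t x0) k - c) \<le> exp (-t) * (norm x0 + cmod c) + B / sqrt t"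
    using assms by (intro rsol_deviation_le) auto
  also have "\<dots> \<le> (norm x0 + cmod c) / sqrt t + B / sqrt t"
    using mult_right_mono[OF exp_minus_le_inverse_sqrt[OF \<open>t \<ge> 1\<close>], of "norm x0 + cmod c"] by simp
  finally show "cmod (apply_bcontfun (rsol t x0) k - c) \<le> (norm x0 + cmod c + B) / sqrt t"
    by (simp add: add_divide_distrib)
qed simp

theorem theorem2:
  fixes x0 :: linf and c :: complex
  assumes "good x0"
    and "(\<lambda>n::nat. SUP k. cmod ((1 / of_nat n) * (\<Sum>j=1..n. apply_bcontfun x0 (k - int j)) - c))
           \<in> O(\<lambda>n. 1 / real n)"
  shows "(\<lambda>t::real. SUP k. cmod (apply_bcontfun (rsol t x0) k - c)) \<in> O[at_top](\<lambda>t. t powr (-1/2))"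
proof -
  obtain B where B: "\<And>k n. cmod (\<Sum>j=1..n. (apply_bcontfun x0 (k - int j) - c)) \<le> B"
    using bigo_mean_deviation_imp_bounded_partial_sums[OF assms(2)] by blast
  define K where "K = norm x0 + cmod c + B"
  have "K \<ge> 0"
    using B[of _ 0] by (simp add: K_def)
  have "norm (SUP k. cmod (apply_bcontfun (rsol t x0) k - c)) \<le> (K + 1) * norm (t powr (-1/2))"
    if "t \<ge> 1" for t
  proof -
    have "t powr (-1/2) = 1 / sqrt t"
      using that by (simp add: powr_minus_divide powr_half_sqrt[symmetric])
    then show ?thesis
      using abs_SUP_rsol_deviation_le[OF that B] divide_right_mono[of K "K + 1" "sqrt t"] that
      by (simp add: K_def)
  qed
  then show ?thesis
    using \<open>K \<ge> 0\<close> by (intro landau_o.bigI[of "K + 1"] eventually_mono[OF eventually_ge_at_top[of 1]]) auto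
qed

end
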